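(* Let $\kappa=4$ and let $\boldsymbol\pi,Q,U$ be as in the context, and suppose $\nu_{ijj}=0$ for all $1<i\le j\le 4$. Then, after possibly permuting the states (i.e., simultaneously permuting the entries of $\boldsymbol\pi$ and the rows of $U$) and multiplying some columns of $U$ by $-1$, one of the following holds: Case A: $\boldsymbol\pi=(1/4,1/4,1/4,1/4)$ and for some $b,c\ge0$ with $b^2+c^2=2$, $$U=\begin{pmatrix}1&c&b&1\\1&-c&-b&1\\1&-b&c&-1\\1&b&-c&-1\end{pmatrix};$$ Case B: $\boldsymbol\pi=(1/8,1/8,1/4,1/2)$ and $$U=\begin{pmatrix}1&2&\sqrt2&1\\1&-2&\sqrt2&1\\1&0&-\sqrt2&1\\1&0&0&-1\end{pmatrix}.$$
   Context: $\boldsymbol\pi=(\pi_1,\dots,\pi_4)$ with $\pi_i>0$, $\sum\pi_i=1$; $Q$ a $4\times4$ matrix with positive off-diagonal entries, zero row sums, $\operatorname{diag}(\boldsymbol\pi)Q$ symmetric. $U$ is a real matrix with $Q=U\operatorname{diag}(0,\lambda_2,\lambda_3,\lambda_4)U^{-1}$, $0>\lambda_2\ge\lambda_3\ge\lambda_4$, $UU^T=\operatorname{diag}(\boldsymbol\pi)^{-1}$ (equivalently $U^T\operatorname{diag}(\boldsymbol\pi)U=I$), and first column $\mathbf 1$. $\nu_{ijk}=\sum_l\pi_lU_{li}U_{lj}U_{lk}$. *)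

theory Defs
  imports Complex_Main "Jordan_Normal_Form.Matrix" "HOL-Combinatorics.Permutations"
begin

text \<open>States and eigen-indices are 0-based: paper index k corresponds to k-1.\<close>

definition nu :: "(nat \<Rightarrow> real) \<Rightarrow> real mat \<Rightarrow> nat \<Rightarrow> nat \<Rightarrow> nat \<Rightarrow> real" where
  "nu p U i j k = (\<Sum>l<4. p l * U $$ (l, i) * U $$ (l, j) * U $$ (l, k))"

end

theory Submission
  imports Defs "Jordan_Normal_Form.Determinant"
begin

text \<open>
  Write \<open>u\<^sub>k\<close> for the \<open>k\<close>-th column of \<open>U\<close>, a function on the four states. The hypothesis
  \<open>U U\<^sup>T = diag(1/\<pi>)\<close> and its consequence \<open>U\<^sup>T diag(\<pi>) U = I\<close> make \<open>u\<^sub>0 = 1, u\<^sub>1, u\<^sub>2, u\<^sub>3\<close> an orthonormal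
  basis for the \<open>\<pi>\<close>-weighted inner product. Expanding \<open>u\<^sub>j\<^sup>2\<close> in this basis, its coefficients
  are \<open>\<nu>\<^sub>k\<^sub>j\<^sub>j\<close>, so the vanishing of \<open>\<nu>\<^sub>i\<^sub>j\<^sub>j\<close> (\<open>0 < i \<le> j\<close>) gives \<open>u\<^sub>3\<^sup>2 = 1\<close>,
  \<open>u\<^sub>2\<^sup>2 = 1 + a u\<^sub>3\<close> and \<open>u\<^sub>1\<^sup>2 = 1 + b u\<^sub>2 + c u\<^sub>3\<close>. Thus \<open>u\<^sub>3\<close> takes values \<open>\<pm>1\<close>, and being
  orthogonal to the constants it splits the states 3+1 or 2+2. In each shape the
  orthogonality relations restricted to the level sets of \<open>u\<^sub>3\<close>, together with the square
  relations, determine the weights and (up to signs, a relabelling of the states and a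
  rotation in the 2+2 case) the columns: the 3+1 shape gives Case B, the 2+2 shape Case A.
\<close>


lemma dual_orthogonality:
  fixes U :: "real mat" and p :: "nat \<Rightarrow> real"
  assumes U: "U \<in> carrier_mat n n" and orth: "U * transpose_mat U = mat_diag n (\<lambda>i. 1 / p i)"
    and l: "l < n" and m: "m < n"
  shows "(\<Sum>k<n. U $$ (l, k) * U $$ (m, k)) = (if l = m then 1 / p l else 0)"
proof -
  have "(\<Sum>k<n. U $$ (l, k) * U $$ (m, k)) = (U * transpose_mat U) $$ (l, m)"
    using U l m by (simp add: scalar_prod_def lessThan_atLeast0)
  also have "\<dots> = (if l = m then 1 / p l else 0)"
    using l m unfolding orth by (simp add: mat_diag_def)
  finally show ?thesis .
qed

text \<open>Since \<open>U\<^sup>T diag(\<pi>)\<close> is a right inverse of the square matrix \<open>U\<close>, it is also a left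
  inverse: the columns of \<open>U\<close> are orthonormal for the inner product weighted by \<open>\<pi>\<close>.\<close>
lemma weighted_orthonormality:
  fixes U :: "real mat" and p :: "nat \<Rightarrow> real"
  assumes U: "U \<in> carrier_mat n n" and orth: "U * transpose_mat U = mat_diag n (\<lambda>i. 1 / p i)"
    and p_pos: "\<forall>i<n. p i > 0" and i: "i < n" and j: "j < n"
  shows "(\<Sum>l<n. p l * U $$ (l, i) * U $$ (l, j)) = (if i = j then 1 else 0)"
proof -
  define V where "V = transpose_mat U * mat_diag n p"
  have V: "V \<in> carrier_mat n n" using U unfolding V_def by auto
  have "U * V = (U * transpose_mat U) * mat_diag n p"
    unfolding V_def using U by (simp add: assoc_mult_mat[symmetric, of _ n n _ n _ n])
  also have "\<dots> = mat_diag n (\<lambda>i. 1 / p i * p i)" using orth by simp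
  also have "\<dots> = 1\<^sub>m n"
    using p_pos by (intro eq_matI) (auto simp: mat_diag_def)
  finally have "V * U = 1\<^sub>m n" using mat_mult_left_right_inverse[OF U V] by blast
  moreover have "(V * U) $$ (i, j) = (\<Sum>l<n. p l * U $$ (l, i) * U $$ (l, j))"
    unfolding V_def using U i j
    by (simp add: mat_diag_mult_right[of _ n] scalar_prod_def lessThan_atLeast0 mult_ac)
  ultimately show ?thesis using i j by simp
qed

lemma expansion:
  fixes u :: "nat \<Rightarrow> nat \<Rightarrow> real" and p f :: "nat \<Rightarrow> real"
  assumes dual: "\<And>l m. l < n \<Longrightarrow> m < n \<Longrightarrow> (\<Sum>k<n. u k l * u k m) = (if l = m then 1 / p l else 0)"
    and p_pos: "\<And>l. l < n \<Longrightarrow> p l > 0" and l: "l < n"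
  shows "f l = (\<Sum>k<n. (\<Sum>m<n. p m * f m * u k m) * u k l)"
proof -
  have "(\<Sum>k<n. (\<Sum>m<n. p m * f m * u k m) * u k l) = (\<Sum>k<n. \<Sum>m<n. p m * f m * (u k m * u k l))"
    by (simp add: sum_distrib_right sum_distrib_left mult_ac)
  also have "\<dots> = (\<Sum>m<n. p m * f m * (\<Sum>k<n. u k m * u k l))"
    by (subst sum.swap) (simp add: sum_distrib_left)
  also have "\<dots> = (\<Sum>m<n. if m = l then f l else 0)"
    using dual l p_pos[OF l] by (intro sum.cong) auto
  also have "\<dots> = f l" using l by simp
  finally show ?thesis by simp
qed

lemma sum_lessThan_4: "(\<Sum>l::nat<4. f l) = f 0 + f 1 + f 2 + (f 3 :: real)"
  by (simp add: numeral_eq_Suc lessThan_Suc)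

lemma all_lessThan_4: "(\<forall>i::nat<4. P i) \<longleftrightarrow> P 0 \<and> P 1 \<and> P 2 \<and> P 3"
  by (auto simp: numeral_eq_Suc less_Suc_eq)

text \<open>A labelling lists the four states in some order; the case analysis below works
  relative to a labelling so that each configuration is treated once up to symmetry.\<close>
definition labelling :: "nat \<Rightarrow> nat \<Rightarrow> nat \<Rightarrow> nat \<Rightarrow> bool" where
  "labelling x y z w \<longleftrightarrow> distinct [x, y, z, w] \<and> x < 4 \<and> y < 4 \<and> z < 4 \<and> w < 4"

lemma labelling_set: "labelling x y z w \<Longrightarrow> {x, y, z, w} = {..<4}"
  unfolding labelling_def by (intro card_subset_eq) auto

lemma labelling_sum:
  assumes "labelling x y z w"
  shows "(\<Sum>l<4. f l) = f x + f y + f z + (f w :: real)"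
  using assms labelling_set[OF assms, symmetric] by (auto simp: labelling_def add.assoc)

lemma list_permutes:
  assumes "distinct xs" "set xs = {..<length xs}"
  shows "(\<lambda>i. if i < length xs then xs ! i else i) permutes {..<length xs}"
proof (rule bij_imp_permutes)
  show "bij_betw (\<lambda>i. if i < length xs then xs ! i else i) {..<length xs} {..<length xs}"
    using bij_betw_nth[OF assms(1) refl assms(2)[symmetric]]
    by (rule bij_betw_cong[THEN iffD1, rotated]) auto
qed auto

definition relabel :: "nat \<Rightarrow> nat \<Rightarrow> nat \<Rightarrow> nat \<Rightarrow> nat \<Rightarrow> nat" where
  "relabel x y z w = (\<lambda>i. if i < 4 then [x, y, z, w] ! i else i)"

lemma relabel_permutes:
  assumes "labelling x y z w"
  shows "relabel x y z w permutes {..<4}"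
proof -
  have "set [x, y, z, w] = {..<length [x, y, z, w]}" "distinct [x, y, z, w]"
    using labelling_set[OF assms] assms by (auto simp: labelling_def)
  from list_permutes[OF this(2,1)] show ?thesis
    unfolding relabel_def by (simp add: numeral_eq_Suc)
qed

lemma relabel_simps [simp]:
  "relabel x y z w 0 = x" "relabel x y z w 1 = y" "relabel x y z w (Suc 0) = y"
  "relabel x y z w 2 = z" "relabel x y z w 3 = w"
  by (simp_all add: relabel_def)

lemma perpendicular_rotation:
  fixes q r b c :: real
  assumes norm: "q\<^sup>2 + r\<^sup>2 = b\<^sup>2 + c\<^sup>2" and perp: "q * b + r * c = 0"
  shows "(q = c \<and> r = - b) \<or> (q = - c \<and> r = b)"
proof -
  have "((q - c)\<^sup>2 + (r + b)\<^sup>2) * ((q + c)\<^sup>2 + (r - b)\<^sup>2)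
      = 4 * (q * b + r * c)\<^sup>2 + (q\<^sup>2 + r\<^sup>2 - b\<^sup>2 - c\<^sup>2)\<^sup>2"
    by (simp add: power2_eq_square algebra_simps)
  then have "((q - c)\<^sup>2 + (r + b)\<^sup>2) * ((q + c)\<^sup>2 + (r - b)\<^sup>2) = 4 * (q * b + r * c)\<^sup>2"
    using norm by simp
  then have "(q - c)\<^sup>2 + (r + b)\<^sup>2 = 0 \<or> (q + c)\<^sup>2 + (r - b)\<^sup>2 = 0"
    using perp by simp
  then show ?thesis by (auto simp: sum_power2_eq_zero_iff)
qed

lemma equal_weights:
  fixes p q u v :: real
  assumes "p * u + q * v = 0" "u\<^sup>2 = v\<^sup>2" "u \<noteq> 0" "p > 0" "q > 0"
  shows "p = q"
proof -
  have "(p * u)\<^sup>2 = (q * v)\<^sup>2" using assms(1) by (simp add: eq_neg_iff_add_eq_0[symmetric])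
  then have "p\<^sup>2 * u\<^sup>2 = q\<^sup>2 * u\<^sup>2" using assms(2) by (simp add: power_mult_distrib)
  then show ?thesis using assms(3-5) by (simp add: power2_eq_iff)
qed

lemma sign_pattern_cases:
  fixes f :: "nat \<Rightarrow> real"
  assumes two_valued: "\<And>l. l < 4 \<Longrightarrow> f l = f 0 \<or> f l = - f 0"
    and nonconstant: "\<not> (f 1 = f 0 \<and> f 2 = f 0 \<and> f 3 = f 0)"
  obtains (three_one) x y z w where "labelling x y z w" "f y = f x" "f z = f x" "f w = - f x"
    | (two_two) x y z w where "labelling x y z w" "f y = f x" "f z = - f x" "f w = - f x"
proof -
  have "labelling 0 1 2 3" "labelling 0 1 3 2" "labelling 0 2 3 1" "labelling 0 2 1 3"
    "labelling 0 3 1 2" "labelling 1 2 3 0"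
    by (simp_all add: labelling_def)
  moreover have "f 1 = f 0 \<or> f 1 = - f 0" "f 2 = f 0 \<or> f 2 = - f 0" "f 3 = f 0 \<or> f 3 = - f 0"
    using two_valued by simp_all
  ultimately show ?thesis using nonconstant that by (smt (verit))
qed

definition uniform_frame :: "real \<Rightarrow> real \<Rightarrow> real mat" where
  "uniform_frame b c = mat_of_rows_list 4 [[1, c, b, 1], [1, -c, -b, 1], [1, -b, c, -1], [1, b, -c, -1]]"

definition dyadic_frame :: "real mat" where
  "dyadic_frame = mat_of_rows_list 4 [[1, 2, sqrt 2, 1], [1, -2, sqrt 2, 1], [1, 0, -sqrt 2, 1], [1, 0, 0, -1]]"

definition normal_form :: "(nat \<Rightarrow> real) \<Rightarrow> (nat \<Rightarrow> nat \<Rightarrow> real) \<Rightarrow> bool" where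
  "normal_form p u \<longleftrightarrow> (\<exists>\<sigma> s. \<sigma> permutes {..<4} \<and> (\<forall>j<4. s j = 1 \<or> s j = (-1::real)) \<and>
     (let U' = mat 4 4 (\<lambda>(i, j). s j * u j (\<sigma> i)) in
       ((\<forall>i<4. p (\<sigma> i) = 1/4) \<and> (\<exists>b c. b \<ge> 0 \<and> c \<ge> 0 \<and> b\<^sup>2 + c\<^sup>2 = 2 \<and> U' = uniform_frame b c))
     \<or> (p (\<sigma> 0) = 1/8 \<and> p (\<sigma> 1) = 1/8 \<and> p (\<sigma> 2) = 1/4 \<and> p (\<sigma> 3) = 1/2 \<and> U' = dyadic_frame)))"

lemma relabelled_matrix:
  assumes "\<forall>j<4. f j x = rs ! 0 ! j" "\<forall>j<4. f j y = rs ! 1 ! j"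
    "\<forall>j<4. f j z = rs ! 2 ! j" "\<forall>j<4. f j w = rs ! 3 ! j" "length rs = 4"
  shows "mat 4 4 (\<lambda>(i, j). f j (relabel x y z w i)) = mat_of_rows_list 4 rs"
proof (rule eq_matI)
  fix i j :: nat assume "i < dim_row (mat_of_rows_list 4 rs)" "j < dim_col (mat_of_rows_list 4 rs)"
  then have "i < 4" "j < 4" using assms(5) by (simp_all add: mat_of_rows_list_def)
  moreover have "i < 4 \<Longrightarrow> i = 0 \<or> i = 1 \<or> i = 2 \<or> i = 3" by auto
  ultimately show "mat 4 4 (\<lambda>(i, j). f j (relabel x y z w i)) $$ (i, j) = mat_of_rows_list 4 rs $$ (i, j)"
    using assms by (auto simp: mat_of_rows_list_def)
qed (use assms(5) in \<open>simp_all add: mat_of_rows_list_def\<close>)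

lemma normal_form_uniformI:
  assumes L: "labelling x y z w" and s: "\<forall>j<4. s j = 1 \<or> s j = -1"
    and p: "p x = 1/4" "p y = 1/4" "p z = 1/4" "p w = 1/4"
    and bc: "b \<ge> 0" "c \<ge> 0" "b\<^sup>2 + c\<^sup>2 = 2"
    and rows: "\<forall>j<4. s j * u j x = [1, c, b, 1] ! j" "\<forall>j<4. s j * u j y = [1, -c, -b, 1] ! j"
      "\<forall>j<4. s j * u j z = [1, -b, c, -1] ! j" "\<forall>j<4. s j * u j w = [1, b, -c, -1] ! j"
  shows "normal_form p u"
proof -
  have "mat 4 4 (\<lambda>(i, j). s j * u j (relabel x y z w i)) = uniform_frame b c"
    unfolding uniform_frame_def using rows by (intro relabelled_matrix) simp_all
  moreover have "\<forall>i<4. p (relabel x y z w i) = 1/4" using p by (auto simp: all_lessThan_4 relabel_def)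
  ultimately show ?thesis unfolding normal_form_def Let_def
    by (intro exI[of _ "relabel x y z w"] exI[of _ s] exI[of _ b] exI[of _ c] conjI disjI1)
      (use relabel_permutes[OF L] s bc in simp_all)
qed

lemma normal_form_dyadicI:
  assumes L: "labelling x y z w" and s: "\<forall>j<4. s j = 1 \<or> s j = -1"
    and p: "p x = 1/8" "p y = 1/8" "p z = 1/4" "p w = 1/2"
    and rows: "\<forall>j<4. s j * u j x = [1, 2, sqrt 2, 1] ! j" "\<forall>j<4. s j * u j y = [1, -2, sqrt 2, 1] ! j"
      "\<forall>j<4. s j * u j z = [1, 0, -sqrt 2, 1] ! j" "\<forall>j<4. s j * u j w = [1, 0, 0, -1] ! j"
  shows "normal_form p u"
proof -
  have "mat 4 4 (\<lambda>(i, j). s j * u j (relabel x y z w i)) = dyadic_frame"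
    unfolding dyadic_frame_def using rows by (intro relabelled_matrix) simp_all
  then show ?thesis unfolding normal_form_def Let_def
    by (intro exI[of _ "relabel x y z w"] exI[of _ s] conjI disjI2)
      (use relabel_permutes[OF L] s p in simp_all)
qed

text \<open>The scalar setting of the theorem: \<open>u k l\<close> is the entry of column \<open>k\<close> of \<open>U\<close> at
  state \<open>l\<close>.\<close>
locale zero_nu_basis =
  fixes p :: "nat \<Rightarrow> real" and u :: "nat \<Rightarrow> nat \<Rightarrow> real"
  assumes p_pos: "\<And>l. l < 4 \<Longrightarrow> p l > 0"
    and first_constant: "\<And>l. l < 4 \<Longrightarrow> u 0 l = 1"
    and orthonormal: "\<And>i j. i < 4 \<Longrightarrow> j < 4 \<Longrightarrow>
      (\<Sum>l<4. p l * u i l * u j l) = (if i = j then 1 else 0)"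
    and dual: "\<And>l m. l < 4 \<Longrightarrow> m < 4 \<Longrightarrow>
      (\<Sum>k<4. u k l * u k m) = (if l = m then 1 / p l else 0)"
    and nu_zero: "\<And>i j. 0 < i \<Longrightarrow> i \<le> j \<Longrightarrow> j < 4 \<Longrightarrow>
      (\<Sum>l<4. p l * u i l * u j l * u j l) = 0"
begin

lemma square_coefficient:
  assumes "k \<le> j" "j < 4"
  shows "(\<Sum>m<4. p m * (u j m)\<^sup>2 * u k m) = (if k = 0 then 1 else 0)"
proof (cases "k = 0")
  case True
  then show ?thesis using orthonormal[of j j] assms first_constant
    by (simp add: power2_eq_square mult_ac)
next
  case False
  then show ?thesis using nu_zero[of k j] assms
    by (simp add: power2_eq_square mult_ac)
qed

lemma square_expansion:
  assumes "j < 4" "l < 4"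
  shows "(u j l)\<^sup>2 = (\<Sum>k<4. (\<Sum>m<4. p m * (u j m)\<^sup>2 * u k m) * u k l)"
  using assms by (intro expansion[where n = 4]) (simp_all add: dual p_pos)

lemma u3_square: "l < 4 \<Longrightarrow> (u 3 l)\<^sup>2 = 1"
  using square_expansion[of 3 l] square_coefficient[of 0 3] square_coefficient[of 1 3]
    square_coefficient[of 2 3] square_coefficient[of 3 3] first_constant[of l]
  by (simp add: sum_lessThan_4)

lemma u2_square: "\<exists>a. \<forall>l<4. (u 2 l)\<^sup>2 = 1 + a * u 3 l"
proof (intro exI allI impI)
  fix l :: nat assume "l < 4"
  then show "(u 2 l)\<^sup>2 = 1 + (\<Sum>m<4. p m * (u 2 m)\<^sup>2 * u 3 m) * u 3 l"
    using square_expansion[of 2 l] square_coefficient[of 0 2] square_coefficient[of 1 2]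
      square_coefficient[of 2 2] first_constant[of l]
    by (simp add: sum_lessThan_4)
qed

lemma u1_square: "\<exists>b c. \<forall>l<4. (u 1 l)\<^sup>2 = 1 + b * u 2 l + c * u 3 l"
proof (intro exI allI impI)
  fix l :: nat assume "l < 4"
  then show "(u 1 l)\<^sup>2
      = 1 + (\<Sum>m<4. p m * (u 1 m)\<^sup>2 * u 2 m) * u 2 l + (\<Sum>m<4. p m * (u 1 m)\<^sup>2 * u 3 m) * u 3 l"
    using square_expansion[of 1 l] square_coefficient[of 0 1] square_coefficient[of 1 1]
      first_constant[of l]
    by (simp add: sum_lessThan_4)
qed

text \<open>Weighting by \<open>1 + s u\<^sub>3\<close> picks out the level sets of \<open>u\<^sub>3\<close>: orthogonality of
  \<open>u\<^sub>k\<close> (\<open>k < 3\<close>) to \<open>u\<^sub>0\<close> and \<open>u\<^sub>3\<close> controls the weighted sums of \<open>u\<^sub>k\<close> over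
  each level set.\<close>
lemma level_sum:
  assumes "k < 3"
  shows "(\<Sum>l<4. p l * u k l * (1 + s * u 3 l)) = (if k = 0 then 1 else 0)"
proof -
  have "(\<Sum>l<4. p l * u k l * (1 + s * u 3 l))
      = (\<Sum>l<4. p l * u k l * u 0 l) + s * (\<Sum>l<4. p l * u k l * u 3 l)"
    using first_constant by (simp add: sum_lessThan_4 algebra_simps)
  then show ?thesis using orthonormal[of k 0] orthonormal[of k 3] assms by simp
qed

lemma u3_sign: "l < 4 \<Longrightarrow> u 3 l = 1 \<or> u 3 l = -1"
  using u3_square by (simp add: power2_eq_1_iff)

lemma orthonormal_at:
  assumes "labelling x y z w" "i < 4" "j < 4"
  shows "p x * u i x * u j x + p y * u i y * u j y + p z * u i z * u j z + p w * u i w * u j w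
    = (if i = j then 1 else 0)"
  using orthonormal[OF assms(2,3)] labelling_sum[OF assms(1), of "\<lambda>l. p l * u i l * u j l"] by simp

lemma three_one_sums:
  assumes L: "labelling x y z w" and pat: "u 3 y = u 3 x" "u 3 z = u 3 x" "u 3 w = - u 3 x"
    and k: "k < 3"
  shows "p w * u k w = (if k = 0 then 1/2 else 0)"
    and "p x * u k x + p y * u k y + p z * u k z = (if k = 0 then 1/2 else 0)"
proof -
  have e: "u 3 x * u 3 x = 1" using u3_square L by (simp add: labelling_def power2_eq_square)
  note level = level_sum[OF k]
  from level[of "- u 3 x"] show "p w * u k w = (if k = 0 then 1/2 else 0)"
    using e pat by (cases "k = 0") (simp_all add: labelling_sum[OF L])
  from level[of "u 3 x"] show "p x * u k x + p y * u k y + p z * u k z = (if k = 0 then 1/2 else 0)"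
    using e pat by (cases "k = 0") (simp_all add: labelling_sum[OF L])
qed

lemma two_two_sums:
  assumes L: "labelling x y z w" and pat: "u 3 y = u 3 x" "u 3 z = - u 3 x" "u 3 w = - u 3 x"
    and k: "k < 3"
  shows "p x * u k x + p y * u k y = (if k = 0 then 1/2 else 0)"
    and "p z * u k z + p w * u k w = (if k = 0 then 1/2 else 0)"
proof -
  have e: "u 3 x * u 3 x = 1" using u3_square L by (simp add: labelling_def power2_eq_square)
  note level = level_sum[OF k]
  from level[of "u 3 x"] show "p x * u k x + p y * u k y = (if k = 0 then 1/2 else 0)"
    using e pat by (cases "k = 0") (simp_all add: labelling_sum[OF L])
  from level[of "- u 3 x"] show "p z * u k z + p w * u k w = (if k = 0 then 1/2 else 0)"
    using e pat by (cases "k = 0") (simp_all add: labelling_sum[OF L])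
qed

text \<open>In the 3+1 shape the isolated state \<open>w\<close> has weight \<open>1/2\<close> and \<open>u\<^sub>1, u\<^sub>2\<close> vanish
  there; evaluating the square relations at \<open>w\<close> fixes their \<open>u\<^sub>3\<close>-coefficients.\<close>
lemma three_one_basic:
  assumes L: "labelling x y z w" and pat: "u 3 y = u 3 x" "u 3 z = u 3 x" "u 3 w = - u 3 x"
  shows "p w = 1/2" and "u 2 w = 0" and "u 1 w = 0"
    and "\<And>l. l < 4 \<Longrightarrow> (u 2 l)\<^sup>2 = 1 + u 3 x * u 3 l"
    and "\<exists>b. \<forall>l<4. (u 1 l)\<^sup>2 = 1 + b * u 2 l + u 3 x * u 3 l"
proof -
  have lt: "x < 4" "w < 4" using L by (simp_all add: labelling_def)
  have e: "u 3 x * u 3 x = 1" using u3_square[OF lt(1)] by (simp add: power2_eq_square)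
  have inverse_is_e: "a = u 3 x" if "a * u 3 x = 1" for a
    using that e by (metis mult.assoc mult_1_left mult_1_right)
  have pw: "p w > 0" using p_pos lt(2) .
  show "p w = 1/2" using three_one_sums(1)[OF L pat, of 0] first_constant[OF lt(2)] by simp
  show u2w: "u 2 w = 0" using three_one_sums(1)[OF L pat, of 2] pw by simp
  show u1w: "u 1 w = 0" using three_one_sums(1)[OF L pat, of 1] pw by simp
  obtain a where a: "\<forall>l<4. (u 2 l)\<^sup>2 = 1 + a * u 3 l" using u2_square by blast
  then have "a = u 3 x" using lt(2) u2w pat(3) by (intro inverse_is_e) auto
  then show "\<And>l. l < 4 \<Longrightarrow> (u 2 l)\<^sup>2 = 1 + u 3 x * u 3 l" using a by simp
  obtain b c where bc: "\<forall>l<4. (u 1 l)\<^sup>2 = 1 + b * u 2 l + c * u 3 l" using u1_square by blast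
  then have "c = u 3 x" using lt(2) u1w u2w pat(3) by (intro inverse_is_e) auto
  then show "\<exists>b. \<forall>l<4. (u 1 l)\<^sup>2 = 1 + b * u 2 l + u 3 x * u 3 l" using bc by blast
qed

lemma three_one_dyadic_values:
  assumes L: "labelling x y z w" and pat: "u 3 y = u 3 x" "u 3 z = u 3 x" "u 3 w = - u 3 x"
    and pat2: "u 2 y = u 2 x" "u 2 z = - u 2 x"
  shows "p x = 1/8" and "p y = 1/8" and "p z = 1/4" and "(u 2 x)\<^sup>2 = 2"
    and "(u 1 x)\<^sup>2 = 4" and "u 1 y = - u 1 x" and "u 1 z = 0"
proof -
  have lt: "x < 4" "y < 4" "z < 4" using L by (simp_all add: labelling_def)
  have e: "u 3 x * u 3 x = 1" using u3_square[OF lt(1)] by (simp add: power2_eq_square)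
  note basic = three_one_basic[OF L pat]
  show "(u 2 x)\<^sup>2 = 2" using basic(4)[OF lt(1)] e by simp
  then have r: "u 2 x \<noteq> 0" by auto
  obtain b where b: "\<forall>l<4. (u 1 l)\<^sup>2 = 1 + b * u 2 l + u 3 x * u 3 l" using basic(5) by blast
  have "u 2 x * (p x + p y - p z) = 0"
    using three_one_sums(2)[OF L pat, of 2] pat2 by (simp add: algebra_simps)
  then have pz: "p z = p x + p y" using r by simp
  have "u 2 x * (p x * u 1 x + p y * u 1 y - p z * u 1 z) = 0"
    using orthonormal_at[OF L, of 1 2] pat2 basic(2) by (simp add: algebra_simps)
  then have "p x * u 1 x + p y * u 1 y - p z * u 1 z = 0" using r by simp
  moreover have "p x * u 1 x + p y * u 1 y + p z * u 1 z = 0"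
    using three_one_sums(2)[OF L pat, of 1] by simp
  ultimately have "p z * u 1 z = 0" by linarith
  then show u1z: "u 1 z = 0" using p_pos[OF lt(3)] by simp
  have "b * u 2 x = 2" using b lt(3) u1z pat pat2 e by auto
  then have squares: "(u 1 x)\<^sup>2 = 4" "(u 1 y)\<^sup>2 = 4" using b lt pat pat2 e by auto
  then show "(u 1 x)\<^sup>2 = 4" by simp
  have lin: "p x * u 1 x + p y * u 1 y = 0" using three_one_sums(2)[OF L pat, of 1] u1z by simp
  have pxy: "p x = p y"
    using squares lt p_pos by (intro equal_weights[OF lin]) auto
  then have "p y * (u 1 x + u 1 y) = 0" using lin by (simp add: algebra_simps)
  then show "u 1 y = - u 1 x" using p_pos[OF lt(2)] by simp
  have "p x + p y + p z = 1/2"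
    using three_one_sums(2)[OF L pat, of 0] first_constant lt by simp
  then show "p x = 1/8" "p y = 1/8" "p z = 1/4" using pz pxy by linarith+
qed

lemma three_one_dyadic:
  assumes L: "labelling x y z w" and pat: "u 3 y = u 3 x" "u 3 z = u 3 x" "u 3 w = - u 3 x"
    and pat2: "u 2 y = u 2 x" "u 2 z = - u 2 x"
  shows "normal_form p u"
proof -
  note basic = three_one_basic[OF L pat] and dyadic = three_one_dyadic_values[OF L pat pat2]
  have lt: "x < 4" "y < 4" "z < 4" "w < 4" using L by (simp_all add: labelling_def)
  have signs: "u 1 x = 2 \<or> u 1 x = -2" "u 2 x = sqrt 2 \<or> u 2 x = - sqrt 2" "u 3 x = 1 \<or> u 3 x = -1"
    using dyadic(4,5) u3_sign[OF lt(1)] power2_eq_iff[of _ "sqrt 2"] power2_eq_iff[of _ 2] by auto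
  define s where "s = (\<lambda>j. [1, u 1 x / 2, u 2 x / sqrt 2, u 3 x] ! j)"
  show ?thesis
  proof (rule normal_form_dyadicI[OF L, of s])
    show "\<forall>j<4. s j = 1 \<or> s j = -1" using signs by (auto simp: all_lessThan_4 s_def)
  qed (use dyadic basic signs lt first_constant pat pat2 real_div_sqrt[of 2] in
    \<open>auto simp: all_lessThan_4 s_def\<close>)
qed

text \<open>In the 3+1 shape \<open>u\<^sub>2 = \<pm>\<surd>2\<close> on the three states and cannot have constant sign
  there, so some relabelling brings it into the previous configuration.\<close>
lemma three_one:
  assumes L: "labelling x y z w" and pat: "u 3 y = u 3 x" "u 3 z = u 3 x" "u 3 w = - u 3 x"
  shows "normal_form p u"
proof -
  have lt: "x < 4" "y < 4" "z < 4" using L by (simp_all add: labelling_def)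
  have e: "u 3 x * u 3 x = 1" using u3_square[OF lt(1)] by (simp add: power2_eq_square)
  note basic = three_one_basic[OF L pat]
  have r: "u 2 x \<noteq> 0" using basic(4)[OF lt(1)] e by auto
  have "(u 2 y)\<^sup>2 = (u 2 x)\<^sup>2" "(u 2 z)\<^sup>2 = (u 2 x)\<^sup>2" using basic(4) lt pat by simp_all
  then have y: "u 2 y = u 2 x \<or> u 2 y = - u 2 x" and z: "u 2 z = u 2 x \<or> u 2 z = - u 2 x"
    by (simp_all add: power2_eq_iff)
  have sum: "p x * u 2 x + p y * u 2 y + p z * u 2 z = 0" using three_one_sums(2)[OF L pat, of 2] by simp
  have not_all_equal: "\<not> (u 2 y = u 2 x \<and> u 2 z = u 2 x)"
  proof
    assume "u 2 y = u 2 x \<and> u 2 z = u 2 x"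
    then have "u 2 x * (p x + p y + p z) = 0" using sum by (simp add: algebra_simps)
    moreover have "p x + p y + p z > 0"
      using p_pos[OF lt(1)] p_pos[OF lt(2)] p_pos[OF lt(3)] by linarith
    ultimately show False using r by simp
  qed
  consider "u 2 y = u 2 x" "u 2 z = - u 2 x" | "u 2 z = u 2 x" "u 2 y = - u 2 x"
    | "u 2 y = - u 2 x" "u 2 z = - u 2 x"
    using y z not_all_equal by blast
  then show ?thesis
  proof cases
    case 1
    then show ?thesis using three_one_dyadic[OF L pat] by simp
  next
    case 2
    have "labelling x z y w" using L by (auto simp: labelling_def)
    then show ?thesis using 2 pat by (intro three_one_dyadic[of x z y w]) auto
  next
    case 3
    have "labelling y z x w" using L by (auto simp: labelling_def)
    then show ?thesis using 3 pat by (intro three_one_dyadic[of y z x w]) auto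
  qed
qed

text \<open>In the 2+2 shape the two states of a level set have equal weight: otherwise
  \<open>u\<^sub>1\<close> and \<open>u\<^sub>2\<close> would vanish on them, contradicting orthogonality of their rows.\<close>
lemma two_two_pair_weights:
  assumes L: "labelling x y z w" and pat: "u 3 y = u 3 x" "u 3 z = - u 3 x" "u 3 w = - u 3 x"
  shows "p x = p y"
proof -
  have lt: "x < 4" "y < 4" using L by (simp_all add: labelling_def)
  have pos: "p x > 0" "p y > 0" using p_pos lt by simp_all
  have lin: "p x * u k x + p y * u k y = 0" if "0 < k" "k < 3" for k
    using two_two_sums(1)[OF L pat, of k] that by simp
  obtain a where a: "\<forall>l<4. (u 2 l)\<^sup>2 = 1 + a * u 3 l" using u2_square by blast
  have sq2: "(u 2 x)\<^sup>2 = (u 2 y)\<^sup>2" using a lt pat by simp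
  show ?thesis
  proof (cases "u 2 x = 0")
    case False
    then show ?thesis using equal_weights[OF lin[of 2] sq2 False pos] by simp
  next
    case u2x: True
    then have u2y: "u 2 y = 0" using sq2 by simp
    obtain b c where bc: "\<forall>l<4. (u 1 l)\<^sup>2 = 1 + b * u 2 l + c * u 3 l" using u1_square by blast
    have sq1: "(u 1 x)\<^sup>2 = (u 1 y)\<^sup>2" using bc lt pat u2x u2y by simp
    show ?thesis
    proof (cases "u 1 x = 0")
      case False
      then show ?thesis using equal_weights[OF lin[of 1] sq1 False pos] by simp
    next
      case u1x: True
      then have "u 1 y = 0" using sq1 by simp
      moreover have "(\<Sum>k<4. u k x * u k y) = 0" using dual lt L by (simp add: labelling_def)
      ultimately have "1 + u 3 x * u 3 x = 0"
        using first_constant lt u1x u2x u2y pat by (simp add: sum_lessThan_4)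
      then show ?thesis using u3_sign[OF lt(1)] by auto
    qed
  qed
qed

lemma two_two_values:
  assumes L: "labelling x y z w" and pat: "u 3 y = u 3 x" "u 3 z = - u 3 x" "u 3 w = - u 3 x"
  shows "p x = 1/4" and "p y = 1/4" and "p z = 1/4" and "p w = 1/4"
    and "\<And>k. 0 < k \<Longrightarrow> k < 3 \<Longrightarrow> u k y = - u k x"
    and "\<And>k. 0 < k \<Longrightarrow> k < 3 \<Longrightarrow> u k w = - u k z"
proof -
  have lt: "x < 4" "y < 4" "z < 4" "w < 4" using L by (simp_all add: labelling_def)
  have pxy: "p x = p y" by (rule two_two_pair_weights[OF L pat])
  have "labelling z w x y" using L by (auto simp: labelling_def)
  then have pzw: "p z = p w" by (rule two_two_pair_weights) (use pat in auto)
  have "p x + p y = 1/2" "p z + p w = 1/2"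
    using two_two_sums[OF L pat, of 0] first_constant lt by simp_all
  then show px: "p x = 1/4" "p y = 1/4" "p z = 1/4" "p w = 1/4" using pxy pzw by linarith+
  show "u k y = - u k x" "u k w = - u k z" if "0 < k" "k < 3" for k
    using two_two_sums[OF L pat, of k] px that by simp_all
qed

text \<open>Normalising the signs of \<open>u\<^sub>2\<close>, the vectors \<open>(u\<^sub>1 x, u\<^sub>1 z)\<close> and
  \<open>(u\<^sub>2 x, u\<^sub>2 z)\<close> are perpendicular of squared length \<open>2\<close>: this is Case A.\<close>
lemma two_two_uniform:
  assumes L: "labelling x y z w" and pat: "u 3 y = u 3 x" "u 3 z = - u 3 x" "u 3 w = - u 3 x"
    and nonneg: "u 2 x \<ge> 0" "u 2 z \<ge> 0"
  shows "normal_form p u"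
proof -
  note uniform = two_two_values[OF L pat]
  have lt: "x < 4" using L by (simp add: labelling_def)
  have norm2: "(u 2 x)\<^sup>2 + (u 2 z)\<^sup>2 = 2"
    using orthonormal_at[OF L, of 2 2] uniform by (simp add: power2_eq_square)
  have norm1: "(u 1 x)\<^sup>2 + (u 1 z)\<^sup>2 = 2"
    using orthonormal_at[OF L, of 1 1] uniform by (simp add: power2_eq_square)
  have perp: "u 1 x * u 2 x + u 1 z * u 2 z = 0"
    using orthonormal_at[OF L, of 1 2] uniform by (simp add: algebra_simps)
  obtain t where t: "t = 1 \<or> t = -1" "t * u 1 x = u 2 z" "t * u 1 z = - u 2 x"
    using perpendicular_rotation[of "u 1 x" "u 1 z" "u 2 x" "u 2 z"] norm1 norm2 perp by force
  define s where "s = (\<lambda>j. [1, t, 1, u 3 x] ! j)"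
  show ?thesis
  proof (rule normal_form_uniformI[OF L, of s _ "u 2 x" "u 2 z"])
    show "\<forall>j<4. s j = 1 \<or> s j = -1" using t u3_sign[OF lt] by (auto simp: all_lessThan_4 s_def)
  qed (use uniform nonneg norm2 t u3_sign[OF lt] first_constant L pat in
    \<open>auto simp: all_lessThan_4 s_def labelling_def\<close>)
qed

text \<open>Swapping the states within a level set achieves the sign normalisation.\<close>
lemma two_two:
  assumes L: "labelling x y z w" and pat: "u 3 y = u 3 x" "u 3 z = - u 3 x" "u 3 w = - u 3 x"
  shows "normal_form p u"
proof -
  have u2: "u 2 y = - u 2 x" "u 2 w = - u 2 z" using two_two_values(5,6)[OF L pat, of 2] by simp_all
  have relabellings: "labelling y x z w" "labelling x y w z" "labelling y x w z"
    using L by (auto simp: labelling_def)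
  consider "u 2 x \<ge> 0" "u 2 z \<ge> 0" | "u 2 y \<ge> 0" "u 2 z \<ge> 0" | "u 2 x \<ge> 0" "u 2 w \<ge> 0"
    | "u 2 y \<ge> 0" "u 2 w \<ge> 0"
    using u2 by linarith
  then show ?thesis
  proof cases
    case 1 then show ?thesis using two_two_uniform[OF L pat] by simp
  next
    case 2 then show ?thesis using pat by (intro two_two_uniform[OF relabellings(1)]) auto
  next
    case 3 then show ?thesis using pat by (intro two_two_uniform[OF relabellings(2)]) auto
  next
    case 4 then show ?thesis using pat by (intro two_two_uniform[OF relabellings(3)]) auto
  qed
qed

text \<open>Since \<open>u\<^sub>3 = \<pm>1\<close> is orthogonal to the constants it is not constant, and the two
  shapes are handled above.\<close>
theorem normal_form_exists: "normal_form p u"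
proof -
  have "u 3 0 * (\<Sum>l<4. p l) = (\<Sum>l<4. p l * u 3 l * u 0 l)" if "\<forall>l<4. u 3 l = u 3 0"
    using that first_constant by (simp add: sum_lessThan_4 all_lessThan_4 algebra_simps)
  moreover have "(\<Sum>l<4. p l) = 1" using orthonormal[of 0 0] first_constant by simp
  ultimately have nonconstant: "\<not> (u 3 1 = u 3 0 \<and> u 3 2 = u 3 0 \<and> u 3 3 = u 3 0)"
    using orthonormal[of 3 0] u3_sign[of 0] by (auto simp: all_lessThan_4)
  have two_valued: "u 3 l = u 3 0 \<or> u 3 l = - u 3 0" if "l < 4" for l
    using u3_sign[OF that] u3_sign[of 0] by auto
  show ?thesis
  proof (rule sign_pattern_cases[of "u 3", OF two_valued nonconstant])
    show "normal_form p u" if "labelling x y z w" "u 3 y = u 3 x" "u 3 z = u 3 x" "u 3 w = - u 3 x"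
      for x y z w
      using three_one that by blast
    show "normal_form p u" if "labelling x y z w" "u 3 y = u 3 x" "u 3 z = - u 3 x" "u 3 w = - u 3 x"
      for x y z w
      using two_two that by blast
  qed
qed

end

theorem lemma2:
  fixes p :: "nat \<Rightarrow> real" and Q U :: "real mat" and l2 l3 l4 :: real
  assumes p_pos: "\<forall>i<4. p i > 0"
    and p_sum: "(\<Sum>i<4. p i) = 1"
    and Q_dim: "Q \<in> carrier_mat 4 4"
    and Q_off: "\<forall>i<4. \<forall>j<4. i \<noteq> j \<longrightarrow> Q $$ (i, j) > 0"
    and Q_rows: "\<forall>i<4. (\<Sum>j<4. Q $$ (i, j)) = 0"
    and Q_rev: "transpose_mat (mat_diag 4 p * Q) = mat_diag 4 p * Q"
    and U_dim: "U \<in> carrier_mat 4 4"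
    and eig: "0 > l2" "l2 \<ge> l3" "l3 \<ge> l4"
    and U_diag: "\<exists>V \<in> carrier_mat 4 4. U * V = 1\<^sub>m 4 \<and> V * U = 1\<^sub>m 4 \<and>
                   Q = U * mat_diag 4 (\<lambda>i. [0, l2, l3, l4] ! i) * V"
    and U_orth: "U * transpose_mat U = mat_diag 4 (\<lambda>i. 1 / p i)"
    and U_col1: "\<forall>i<4. U $$ (i, 0) = 1"
    and nu0: "\<forall>i j. 0 < i \<longrightarrow> i \<le> j \<longrightarrow> j < 4 \<longrightarrow> nu p U i j j = 0"
  shows "\<exists>\<sigma> s. \<sigma> permutes {..<4} \<and> (\<forall>j<4. s j = 1 \<or> s j = (-1::real)) \<and>
          (let U' = mat 4 4 (\<lambda>(i, j). s j * U $$ (\<sigma> i, j)) in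
            ((\<forall>i<4. p (\<sigma> i) = 1/4) \<and>
             (\<exists>b c. b \<ge> 0 \<and> c \<ge> 0 \<and> b\<^sup>2 + c\<^sup>2 = 2 \<and>
                U' = mat_of_rows_list 4 [[1, c, b, 1], [1, -c, -b, 1], [1, -b, c, -1], [1, b, -c, -1]]))
          \<or> (p (\<sigma> 0) = 1/8 \<and> p (\<sigma> 1) = 1/8 \<and> p (\<sigma> 2) = 1/4 \<and> p (\<sigma> 3) = 1/2 \<and>
             U' = mat_of_rows_list 4 [[1, 2, sqrt 2, 1], [1, -2, sqrt 2, 1], [1, 0, -sqrt 2, 1], [1, 0, 0, -1]]))"
proof -
  define u where "u = (\<lambda>k l. U $$ (l, k))"
  interpret zero_nu_basis p u
  proof
    show "\<And>l. l < 4 \<Longrightarrow> p l > 0" "\<And>l. l < 4 \<Longrightarrow> u 0 l = 1"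
      using p_pos U_col1 by (simp_all add: u_def)
    show "(\<Sum>l<4. p l * u i l * u j l) = (if i = j then 1 else 0)" if "i < 4" "j < 4" for i j
      using weighted_orthonormality[OF U_dim U_orth p_pos that] by (simp add: u_def)
    show "(\<Sum>k<4. u k l * u k m) = (if l = m then 1 / p l else 0)" if "l < 4" "m < 4" for l m
      using dual_orthogonality[OF U_dim U_orth that] by (simp add: u_def)
    show "(\<Sum>l<4. p l * u i l * u j l * u j l) = 0" if "0 < i" "i \<le> j" "j < 4" for i j
      using nu0 that by (simp add: u_def nu_def)
  qed
  show ?thesis
    using normal_form_exists unfolding normal_form_def uniform_frame_def dyadic_frame_def u_def .
qed

end
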